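(* Consider the symmetric Markov process and the associated quantities described in the context (satisfying Assumptions (A), (B), (C), (D) and the ergodicity condition (E$_s$)). Define \[F(t)=\sum_{j=1}^{K(c+1)}\gamma_j\sum_{n_0=0}^\infty\sum_{m=0}^c\beta_{0,j}^{n_0}\,\omega_j(m)\,F_{n_0,m}(t),\qquad t\ge0.\] Then \[F(t)=\sum_{j=1}^{K(c+1)}\frac{\gamma_j\,\omega_j\mathbf 1}{1-\beta_{0,j}}\exp\Bigl(t\sum_{i=1}^K\Bigl(1-\frac{1}{\beta_{0,j}^{\,i}}\Bigr)\lambda_i\Bigr),\qquad t\ge0,\] where $\omega_j=(\omega_j(0),\dots,\omega_j(c))$ and $\mathbf 1$ is the column vector of $c+1$ ones.
   Context: Fix integers $c\ge1$, $K\ge1$. Consider an irreducible continuous-time Markov process on $V\cup W$, $V$ finite, $W=\{\mathbf n=(n_0,\dots,n_c): n_0\in\{0,1,\dots\},\ n_i\in\{0,1\}\}$, which is symmetric: there are nonnegative rates $a_k,b_k,c_k,d_k$ ($k\le K$ integer), the same for every $i$. From $\mathbf n\in W$, for each $i\in\{1,\dots,c\}$ and $k\in\{-n_0,\dots,K\}$, it jumps (changing only coordinates $0$ and $i$) from $(n_0,n_i)=(n_0,0)$ to $(n_0+k,1)$ at rate $a_k$ and to $(n_0+k,0)$ at rate $b_k$, and from $(n_0,1)$ to $(n_0+k,1)$ at rate $c_k$ and to $(n_0+k,0)$ at rate $d_k$; from $\mathbf n$ it jumps into $V$ with total rate $\sum_i\sum_{k\le-n_0-1}((1-n_i)(a_k+b_k)+n_i(c_k+d_k))$;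 no other transitions leave $W$; from $V$ no transitions go to states with $n_0\ge K$. Let $A(z)=\sum_{k\le K}a_kz^{K-k}$, similarly $B,C,D$; $F(z)=z^K(A(1)+B(1)-C(1)-D(1))-B(z)+C(z)$; for $|z|<1$ let $R(z)$ be a fixed square root of $F(z)^2+4A(z)D(z)$. Assumption (A): (i) $A(1),B(1),C(1),D(1)<\infty$; (ii) $A(1),D(1)>0$; (iii) $A'(1),B'(1),C'(1),D'(1)<\infty$; (iv) $a_K=0$ or $d_K=0$; (v) $b_K=c_K\ne0$. Ergodicity (E$_s$): $0<D(1)(A'(1)-KA(1)+B'(1)-KB(1))+A(1)(C'(1)-KC(1)+D'(1)-KD(1))$. For $\eta\in[-1,1]$ let $(\mathrm S_\eta)$ be the equation $\eta R(\beta_0)=B(\beta_0)+C(\beta_0)-\beta_0^K(A(1)+B(1)+C(1)+D(1))$. Assumptions (B),(C): for every $\eta\in\{(c-2k)/c:k=0,\dots,c\}$ and every root $\beta_0$ of $(\mathrm S_\eta)$ with $|\beta_0|<1$: $F(\beta_0)^2+4A(\beta_0)D(\beta_0)\ne0$ and $D(\beta_0)\ne0$. Aggregated representation: with $p$ the equilibrium distribution and $p(n_0,m)=\sum_{\mathbf n\in W:\ n_1+\dots+n_c=m}p(\mathbf n)$, let $(\eta^{(j)},\beta_{0,j})$, $j=1,\dots,K(c+1)$, be the pairs with $\eta^{(j)}\in\{(c-2k)/c:k=0,\dots,c\}$ and $\beta_{0,j}$ a root of $(\mathrm S_{\eta^{(j)}})$ with $|\beta_{0,j}|<1$; pick $x^{(j)}\in\{-1,1\}^c$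 with $-\frac1c\sum_ix^{(j)}_i=\eta^{(j)}$, let $\beta_{i,j}=(F(\beta_{0,j})+x^{(j)}_iR(\beta_{0,j}))/(2D(\beta_{0,j}))$ and $\omega_j(m)=\sum_{n_i\in\{0,1\},\,n_1+\dots+n_c=m}\prod_{i=1}^c\beta_{i,j}^{n_i}$. The constants $\gamma_j$ are the (complex) constants with $p(n_0,m)=\sum_{j=1}^{K(c+1)}\gamma_j\beta_{0,j}^{n_0}\omega_j(m)$ for all $n_0\ge0$, $m=0,\dots,c$. Level matrices: for integers $k\le K$ define $(c+1)\times(c+1)$ matrices $\Lambda_k$ indexed by $m,m'\in\{0,\dots,c\}$ with $\Lambda_k(m,m+1)=a_k(c-m)$, $\Lambda_k(m,m-1)=d_km$, $\Lambda_k(m,m)=b_k(c-m)+c_km$ for $k\ne0$, and for $k=0$ the same off-diagonal entries but $\Lambda_0(m,m)=b_0(c-m)+c_0m-\sum_{k\le K}\bigl((a_k+b_k)(c-m)+(c_k+d_k)m\bigr)$; all other entries $0$. Assumption (D): $\Lambda_i=\lambda_iI$ for $i=1,\dots,K$, for some $\lambda_i\ge0$. First passage: for $n_0\ge0$, $m\in\{0,\dots,c\}$, let $F_{n_0,m}(t)$ be the probability that the first passage time to $V$ exceeds $t$, for the aggregated process $(n_0,m)$ (where $m=n_1+\dots+n_c$) started at $(n_0,m)$ at time $0$ in which all transitions in the positive $n_0$-direction (those with rates $a_k,b_k,c_k,d_k$, $k>0$) are suppressed for $t\ge0$; equivalently, $F_{n_0}(t)=(F_{n_0,0}(t),\dots,F_{n_0,c}(t))^T$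 solves $F_{n_0}'(t)=\sum_{i=0}^K\Lambda_iF_{n_0}(t)+\sum_{k=1}^{n_0}\Lambda_{-k}F_{n_0-k}(t)$, $F_{n_0}(0)=\mathbf 1$. *)

theory Defs
  imports "HOL-Analysis.Analysis"
begin

text \<open>States: Inl v for v in the finite set V, and Inr (n0, n) for the states of W,
  where n :: nat => bool encodes (n_1,...,n_c) in {0,1}^c (n i = True iff n_i = 1),
  with n i = False outside {1..c}. Rates a_k, b_k, c_k, d_k (k <= K) are the
  functions ra, rb, rc, rd :: int => real.\<close>

type_synonym 'v st = "'v + nat \<times> (nat \<Rightarrow> bool)"

definition Wset :: "nat \<Rightarrow> (nat \<times> (nat \<Rightarrow> bool)) set" where
  "Wset c = {(n0, n). \<forall>i. n i \<longrightarrow> i \<in> {1..c}}"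

definition Sset :: "'v set \<Rightarrow> nat \<Rightarrow> 'v st set" where
  "Sset V c = Inl ` V \<union> Inr ` Wset c"

definition crate :: "(int \<Rightarrow> real) \<Rightarrow> (int \<Rightarrow> real) \<Rightarrow> (int \<Rightarrow> real) \<Rightarrow> (int \<Rightarrow> real)
    \<Rightarrow> bool \<Rightarrow> bool \<Rightarrow> int \<Rightarrow> real" where
  "crate ra rb rc rd ni e k =
     (if \<not> ni then (if e then ra k else rb k) else (if e then rc k else rd k))"

definition Wrate :: "nat \<Rightarrow> nat \<Rightarrow> (int \<Rightarrow> real) \<Rightarrow> (int \<Rightarrow> real) \<Rightarrow> (int \<Rightarrow> real)
    \<Rightarrow> (int \<Rightarrow> real) \<Rightarrow> nat \<times> (nat \<Rightarrow> bool) \<Rightarrow> nat \<times> (nat \<Rightarrow> bool) \<Rightarrow> real" where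
  "Wrate c K ra rb rc rd w w' =
     (\<Sum>i\<in>{1..c}. \<Sum>k\<in>{- int (fst w)..int K}. \<Sum>e\<in>(UNIV::bool set).
        (if w' = (nat (int (fst w) + k), (snd w)(i := e))
         then crate ra rb rc rd (snd w i) e k else 0))"

definition Vrate :: "nat \<Rightarrow> (int \<Rightarrow> real) \<Rightarrow> (int \<Rightarrow> real) \<Rightarrow> (int \<Rightarrow> real)
    \<Rightarrow> (int \<Rightarrow> real) \<Rightarrow> nat \<times> (nat \<Rightarrow> bool) \<Rightarrow> real" where
  "Vrate c ra rb rc rd w =
     (\<Sum>i\<in>{1..c}. if snd w i
        then infsum (\<lambda>k. rc k + rd k) {..- int (fst w) - 1}
        else infsum (\<lambda>k. ra k + rb k) {..- int (fst w) - 1})"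

definition sym_process :: "nat \<Rightarrow> nat \<Rightarrow> (int \<Rightarrow> real) \<Rightarrow> (int \<Rightarrow> real) \<Rightarrow> (int \<Rightarrow> real)
    \<Rightarrow> (int \<Rightarrow> real) \<Rightarrow> 'v set \<Rightarrow> ('v st \<Rightarrow> 'v st \<Rightarrow> real) \<Rightarrow> bool" where
  "sym_process c K ra rb rc rd V q \<longleftrightarrow>
     finite V \<and>
     (\<forall>x\<in>Sset V c. \<forall>y\<in>Sset V c. x \<noteq> y \<longrightarrow> 0 \<le> q x y) \<and>
     (\<forall>w\<in>Wset c. \<forall>w'\<in>Wset c. w \<noteq> w' \<longrightarrow> q (Inr w) (Inr w') = Wrate c K ra rb rc rd w w') \<and>
     (\<forall>w\<in>Wset c. (\<Sum>v\<in>V. q (Inr w) (Inl v)) = Vrate c ra rb rc rd w) \<and>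
     (\<forall>v\<in>V. \<forall>w\<in>Wset c. K \<le> fst w \<longrightarrow> q (Inl v) (Inr w) = 0)"

definition irreducible_on :: "'s set \<Rightarrow> ('s \<Rightarrow> 's \<Rightarrow> real) \<Rightarrow> bool" where
  "irreducible_on S q \<longleftrightarrow>
     (\<forall>x\<in>S. \<forall>y\<in>S. (x, y) \<in> {(u, v). u \<in> S \<and> v \<in> S \<and> u \<noteq> v \<and> 0 < q u v}\<^sup>*)"

definition equilibrium :: "'s set \<Rightarrow> ('s \<Rightarrow> 's \<Rightarrow> real) \<Rightarrow> ('s \<Rightarrow> real) \<Rightarrow> bool" where
  "equilibrium S q p \<longleftrightarrow>
     (\<forall>x\<in>S. 0 \<le> p x) \<and> (p has_sum 1) S \<and>
     (\<forall>y\<in>S. ((q y) summable_on (S - {y})) \<and>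
        ((\<lambda>x. p x * q x y) has_sum (p y * infsum (q y) (S - {y}))) (S - {y}))"

definition pagg :: "nat \<Rightarrow> ('v st \<Rightarrow> real) \<Rightarrow> nat \<Rightarrow> nat \<Rightarrow> real" where
  "pagg c p n0 m = (\<Sum>I\<in>{I. I \<subseteq> {1..c} \<and> card I = m}. p (Inr (n0, (\<lambda>i. i \<in> I))))"

text \<open>A(z) = sum_{k<=K} a_k z^(K-k); A(1), and A'(1) = sum_{k<=K} (K-k) a_k.\<close>
definition genf :: "nat \<Rightarrow> (int \<Rightarrow> real) \<Rightarrow> complex \<Rightarrow> complex" where
  "genf K a z = infsum (\<lambda>k. complex_of_real (a k) * z ^ nat (int K - k)) {..int K}"

definition genf1 :: "nat \<Rightarrow> (int \<Rightarrow> real) \<Rightarrow> real" where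
  "genf1 K a = infsum a {..int K}"

definition dgenf1 :: "nat \<Rightarrow> (int \<Rightarrow> real) \<Rightarrow> real" where
  "dgenf1 K a = infsum (\<lambda>k. real_of_int (int K - k) * a k) {..int K}"

definition Fz :: "nat \<Rightarrow> (int \<Rightarrow> real) \<Rightarrow> (int \<Rightarrow> real) \<Rightarrow> (int \<Rightarrow> real) \<Rightarrow> (int \<Rightarrow> real)
    \<Rightarrow> complex \<Rightarrow> complex" where
  "Fz K ra rb rc rd z = z ^ K * complex_of_real (genf1 K ra + genf1 K rb - genf1 K rc - genf1 K rd)
     - genf K rb z + genf K rc z"

definition etaset :: "nat \<Rightarrow> real set" where
  "etaset c = {(real c - 2 * real k) / real c | k. k \<le> c}"

definition S_eq :: "nat \<Rightarrow> (int \<Rightarrow> real) \<Rightarrow> (int \<Rightarrow> real) \<Rightarrow> (int \<Rightarrow> real) \<Rightarrow> (int \<Rightarrow> real)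
    \<Rightarrow> (complex \<Rightarrow> complex) \<Rightarrow> real \<Rightarrow> complex \<Rightarrow> bool" where
  "S_eq K ra rb rc rd R \<eta> \<beta> \<longleftrightarrow>
     complex_of_real \<eta> * R \<beta> = genf K rb \<beta> + genf K rc \<beta>
       - \<beta> ^ K * complex_of_real (genf1 K ra + genf1 K rb + genf1 K rc + genf1 K rd)"

definition rootpairs :: "nat \<Rightarrow> nat \<Rightarrow> (int \<Rightarrow> real) \<Rightarrow> (int \<Rightarrow> real) \<Rightarrow> (int \<Rightarrow> real)
    \<Rightarrow> (int \<Rightarrow> real) \<Rightarrow> (complex \<Rightarrow> complex) \<Rightarrow> (real \<times> complex) set" where
  "rootpairs c K ra rb rc rd R =
     {(\<eta>, \<beta>). \<eta> \<in> etaset c \<and> cmod \<beta> < 1 \<and> S_eq K ra rb rc rd R \<eta> \<beta>}"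

definition omega :: "nat \<Rightarrow> (nat \<Rightarrow> complex) \<Rightarrow> nat \<Rightarrow> complex" where
  "omega c \<beta> m = (\<Sum>I\<in>{I. I \<subseteq> {1..c} \<and> card I = m}. \<Prod>i\<in>I. \<beta> i)"

definition Lam :: "nat \<Rightarrow> nat \<Rightarrow> (int \<Rightarrow> real) \<Rightarrow> (int \<Rightarrow> real) \<Rightarrow> (int \<Rightarrow> real)
    \<Rightarrow> (int \<Rightarrow> real) \<Rightarrow> int \<Rightarrow> nat \<Rightarrow> nat \<Rightarrow> real" where
  "Lam c K ra rb rc rd k m m' =
     (if m' = m + 1 then ra k * (real c - real m)
      else if m' + 1 = m then rd k * real m
      else if m' = m then
        rb k * (real c - real m) + rc k * real m
        - (if k = 0 then infsum (\<lambda>l. (ra l + rb l) * (real c - real m) + (rc l + rd l) * real m)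
                            {..int K} else 0)
      else 0)"

end

theory Submission
  imports Defs
begin

text \<open>For a root \<beta>0 of (S_eta) every \<beta>_i solves D(\<beta>0) \<beta>^2 = F(\<beta>0) \<beta> + A(\<beta>0), so the
  elementary symmetric sums \<omega> of the \<beta>_i form a left eigenvector of the aggregated generator of
  c independent two-state chains, and (S_eta) says that its eigenvalue vanishes. Hence, summed
  against the powers of \<beta>0, the lower level blocks reproduce \<omega> up to the factor
  -(\<Sum>i. \<lambda>_i / \<beta>0^i), while by (D) the upper blocks act as scalars. The generating series
  G(t) = \<Sum>n. \<beta>0^n \<omega> F_n(t) therefore satisfies G' = \<mu> G with \<mu> = \<Sum>i. (1 - \<beta>0^-i) \<lambda>_i and
  G(0) = \<omega> 1 / (1 - \<beta>0). To make this rigorous, the truncations of G satisfy the same ODE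
  up to a remainder of order N^2 |\<beta>0|^N, which is controlled by the energy estimate
  |F_{n,m}(t)| \<le> (n + 1) (c + 1) e^(L t).\<close>

section \<open>Elementary symmetric sums as product-form eigenvectors\<close>

definition esym :: "'b set \<Rightarrow> ('b \<Rightarrow> 'a::comm_ring_1) \<Rightarrow> nat \<Rightarrow> 'a" where
  "esym S \<beta> m = (\<Sum>I\<in>{I. I \<subseteq> S \<and> card I = m}. \<Prod>i\<in>I. \<beta> i)"

lemma esym_empty: "esym {} \<beta> m = (if m = 0 then 1 else 0)"
proof -
  have e: "{I. I \<subseteq> {} \<and> card I = m} = (if m = 0 then {{}} else {})" by auto
  show ?thesis unfolding esym_def e by simp
qed

lemma esym_0: "finite S \<Longrightarrow> esym S \<beta> 0 = 1"
proof -
  assume "finite S"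
  then have "{I. I \<subseteq> S \<and> card I = 0} = {{}}" by (auto dest: finite_subset)
  then show ?thesis unfolding esym_def by simp
qed

lemma esym_insert_Suc:
  assumes "finite S" and "a \<notin> S"
  shows "esym (insert a S) \<beta> (Suc m) = esym S \<beta> (Suc m) + \<beta> a * esym S \<beta> m"
proof -
  let ?X = "{I. I \<subseteq> S \<and> card I = Suc m}" and ?Y = "{I. I \<subseteq> S \<and> card I = m}"
  have fin: "finite I" if "I \<subseteq> insert a S" for I using that assms(1) finite_subset by blast
  have split: "{I. I \<subseteq> insert a S \<and> card I = Suc m} = ?X \<union> insert a ` ?Y"
  proof (intro equalityI subsetI)
    fix I assume I: "I \<in> {I. I \<subseteq> insert a S \<and> card I = Suc m}"
    show "I \<in> ?X \<union> insert a ` ?Y"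
    proof (cases "a \<in> I")
      case True
      then have "I = insert a (I - {a})" "I - {a} \<in> ?Y" using I fin[of I] by auto
      then show ?thesis by blast
    qed (use I in auto)
  next
    fix I assume "I \<in> ?X \<union> insert a ` ?Y"
    moreover have "finite J" if "J \<subseteq> S" for J using that assms(1) finite_subset by blast
    ultimately show "I \<in> {I. I \<subseteq> insert a S \<and> card I = Suc m}"
      using assms(2) by (auto simp: card_insert_if)
  qed
  have "finite ?X" "finite ?Y" using assms(1) by (auto intro: finite_subset[of _ "Pow S"])
  moreover have "?X \<inter> insert a ` ?Y = {}" using assms(2) by auto
  moreover have "inj_on (insert a) ?Y"
    using assms(2) unfolding inj_on_def by (metis insert_ident mem_Collect_eq subsetD)
  moreover have "prod \<beta> (insert a J) = \<beta> a * prod \<beta> J" if "J \<in> ?Y" for J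
    using that assms finite_subset by (subst prod.insert) auto
  ultimately show ?thesis
    unfolding esym_def split by (simp add: sum.union_disjoint sum.reindex sum_distrib_left)
qed

text \<open>Row vector times the generator of n independent two-state chains, aggregated by the
  number m of chains in state 1: a chain jumps up with weight A, down with weight D, and stays
  with weight B (in state 0) or C (in state 1).\<close>
definition bd_vecmult :: "'a::comm_ring_1 \<Rightarrow> 'a \<Rightarrow> 'a \<Rightarrow> 'a \<Rightarrow> nat \<Rightarrow> (nat \<Rightarrow> 'a) \<Rightarrow> nat \<Rightarrow> 'a" where
  "bd_vecmult A B C D n w m = A * (of_nat n - of_nat m + 1) * (if m = 0 then 0 else w (m - 1))
     + D * (of_nat m + 1) * w (m + 1) + (B * (of_nat n - of_nat m) + C * of_nat m) * w m"

lemma esym_bd_eigenvector: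
  fixes A B C D :: "'a::comm_ring_1"
  assumes "finite S" and "\<forall>i\<in>S. D * \<beta> i ^ 2 = (C - B) * \<beta> i + A"
  shows "bd_vecmult A B C D (card S) (esym S \<beta>) m = (\<Sum>i\<in>S. D * \<beta> i + B) * esym S \<beta> m"
  using assms
proof (induction S arbitrary: m rule: finite_induct)
  case empty
  show ?case unfolding bd_vecmult_def by (cases m) (auto simp: esym_empty)
next
  case (insert a S)
  let ?u = "esym S \<beta>" and ?\<sigma> = "\<Sum>i\<in>S. D * \<beta> i + B" and ?b = "\<beta> a"
  have IH: "bd_vecmult A B C D (card S) ?u k = ?\<sigma> * ?u k" for k using insert by auto
  have quad: "D * ?b ^ 2 = (C - B) * ?b + A" using insert.prems by auto
  have new: "esym (insert a S) \<beta> k = ?u k + ?b * (if k = 0 then 0 else ?u (k - 1))" for k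
    using insert esym_insert_Suc[of S a \<beta>] esym_0[of S \<beta>] esym_0[of "insert a S" \<beta>] by (cases k) auto
  have "bd_vecmult A B C D (Suc (card S)) (esym (insert a S) \<beta>) m
      = bd_vecmult A B C D (card S) ?u m
        + ?b * (if m = 0 then 0 else bd_vecmult A B C D (card S) ?u (m - 1))
        + (if m = 0 then 0 else ?u (m - 1)) * (A + (C - B) * ?b - D * ?b ^ 2)
        + (D * ?b + B) * esym (insert a S) \<beta> m"
    unfolding bd_vecmult_def new
    by (cases m; cases "m - 1") (simp_all add: algebra_simps power2_eq_square of_nat_diff)
  also have "\<dots> = (?\<sigma> + (D * ?b + B)) * esym (insert a S) \<beta> m"
    unfolding IH quad new by (cases m) (simp_all add: algebra_simps)
  finally show ?case using insert by (simp add: add.commute)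
qed

section \<open>Growth of the first-passage functions\<close>

lemma exp_growth_bound:
  fixes E E' :: "real \<Rightarrow> real"
  assumes deriv: "\<And>s. 0 \<le> s \<Longrightarrow> (E has_real_derivative E' s) (at s within {0..})"
    and growth: "\<And>s. 0 \<le> s \<Longrightarrow> E' s \<le> L * E s" and t: "0 \<le> t"
  shows "E t \<le> E 0 * exp (L * t)"
proof -
  define \<phi> where "\<phi> s = E s * exp (- L * s)" for s
  have "\<phi> t \<le> \<phi> 0"
  proof (rule DERIV_nonpos_imp_decreasing_open[OF t])
    fix s assume s: "0 < s" "s < t"
    have "(E has_real_derivative E' s) (at s)"
      using deriv[of s] s at_within_interior[of s "{0..}"] by auto
    then have "(\<phi> has_real_derivative (E' s - L * E s) * exp (- L * s)) (at s)"
      unfolding \<phi>_def by (auto intro!: derivative_eq_intros simp: algebra_simps)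
    moreover have "(E' s - L * E s) * exp (- L * s) \<le> 0"
      using growth[of s] s by (intro mult_nonpos_nonneg) auto
    ultimately show "\<exists>y. (\<phi> has_real_derivative y) (at s) \<and> y \<le> 0" by blast
  next
    show "continuous_on {0..t} \<phi>"
      unfolding \<phi>_def
    proof (intro continuous_intros)
      show "continuous_on {0..t} E"
        unfolding continuous_on_eq_continuous_within
      proof
        fix s assume "s \<in> {0..t}"
        then have "continuous (at s within {0..}) E" using deriv[of s] DERIV_continuous by auto
        then show "continuous (at s within {0..t}) E" by (rule continuous_within_subset) auto
      qed
    qed
  qed
  then show ?thesis unfolding \<phi>_def by (simp add: exp_minus field_simps)
qed

lemma bilinear_le_abs_sum_squares:
  fixes f g :: "nat \<Rightarrow> real" and M :: "nat \<Rightarrow> nat \<Rightarrow> real"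
  shows "2 * (\<Sum>m\<le>c. f m * (\<Sum>m'\<le>c. M m m' * g m'))
     \<le> (\<Sum>m\<le>c. \<Sum>m'\<le>c. \<bar>M m m'\<bar>) * ((\<Sum>m\<le>c. (f m)\<^sup>2) + (\<Sum>m\<le>c. (g m)\<^sup>2))"
proof -
  let ?Sf = "\<Sum>m\<le>c. (f m)\<^sup>2" and ?Sg = "\<Sum>m\<le>c. (g m)\<^sup>2"
  have "2 * f m * M m m' * g m' \<le> \<bar>M m m'\<bar> * (?Sf + ?Sg)" if "m \<le> c" "m' \<le> c" for m m'
  proof -
    have "(f m)\<^sup>2 \<le> ?Sf" "(g m')\<^sup>2 \<le> ?Sg"
      using that by (auto intro: member_le_sum[where f="\<lambda>m. (_ m)\<^sup>2"])
    moreover have "2 * \<bar>f m\<bar> * \<bar>g m'\<bar> \<le> (f m)\<^sup>2 + (g m')\<^sup>2"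
      using sum_squares_bound[of "\<bar>f m\<bar>" "\<bar>g m'\<bar>"] by simp
    ultimately have "\<bar>M m m'\<bar> * (2 * \<bar>f m\<bar> * \<bar>g m'\<bar>) \<le> \<bar>M m m'\<bar> * (?Sf + ?Sg)"
      by (intro mult_left_mono) auto
    moreover have "2 * f m * M m m' * g m' \<le> \<bar>M m m'\<bar> * (2 * \<bar>f m\<bar> * \<bar>g m'\<bar>)"
      using abs_ge_self[of "2 * f m * M m m' * g m'"] by (simp add: abs_mult mult_ac)
    ultimately show ?thesis by linarith
  qed
  then have "(\<Sum>m\<le>c. \<Sum>m'\<le>c. 2 * f m * M m m' * g m') \<le> (\<Sum>m\<le>c. \<Sum>m'\<le>c. \<bar>M m m'\<bar> * (?Sf + ?Sg))"
    by (intro sum_mono) auto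
  then show ?thesis
    by (simp add: sum_distrib_left sum_distrib_right mult.assoc mult.left_commute)
qed

lemma convolution_sum_le:
  fixes r G :: "nat \<Rightarrow> real"
  assumes "\<And>k. 0 \<le> r k" and "\<And>j. 0 \<le> G j"
  shows "(\<Sum>n\<le>N. \<Sum>k\<in>{1..n}. r k * G (n - k)) \<le> (\<Sum>k\<in>{1..N}. r k) * (\<Sum>j\<le>N. G j)"
proof -
  define r' where "r' k = (if k = 0 then 0 else r k)" for k
  have r'_nonneg: "0 \<le> r' k" for k unfolding r'_def using assms(1) by simp
  have drop0: "(\<Sum>k\<in>{1..n}. h k) = (\<Sum>k\<le>n. if k = 0 then 0 else h k)" for n and h :: "nat \<Rightarrow> real"
    by (simp add: atMost_atLeast0 sum.atLeast_Suc_atMost)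
  have "(\<Sum>n\<le>N. \<Sum>k\<in>{1..n}. r k * G (n - k)) = (\<Sum>(i, j)\<in>{(i, j). i + j \<le> N}. r' i * G j)"
    unfolding sum.triangle_reindex_eq drop0 r'_def by (auto intro!: sum.cong)
  also have "\<dots> \<le> (\<Sum>(i, j)\<in>{..N} \<times> {..N}. r' i * G j)"
    by (rule sum_mono2) (auto intro: mult_nonneg_nonneg r'_nonneg assms(2))
  also have "\<dots> = (\<Sum>i\<le>N. r' i) * (\<Sum>j\<le>N. G j)"
    by (simp add: sum_product sum.cartesian_product)
  also have "(\<Sum>i\<le>N. r' i) = (\<Sum>k\<in>{1..N}. r k)"
    unfolding drop0 r'_def ..
  finally show ?thesis .
qed

locale level_ode =
  fixes c K :: nat and La :: "int \<Rightarrow> nat \<Rightarrow> nat \<Rightarrow> real" and F :: "nat \<Rightarrow> nat \<Rightarrow> real \<Rightarrow> real"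
  assumes init: "\<And>n m. m \<le> c \<Longrightarrow> F n m 0 = 1"
    and ode: "\<And>n m t. m \<le> c \<Longrightarrow> 0 \<le> t \<Longrightarrow> (F n m has_real_derivative
           (\<Sum>i\<in>{0..K}. \<Sum>m'\<le>c. La (int i) m m' * F n m' t)
            + (\<Sum>k\<in>{1..n}. \<Sum>m'\<le>c. La (- int k) m m' * F (n - k) m' t)) (at t within {0..})"
    and lower_summable: "summable (\<lambda>k. \<Sum>m\<le>c. \<Sum>m'\<le>c. \<bar>La (- int (Suc k)) m m'\<bar>)"
begin

definition drift :: "nat \<Rightarrow> nat \<Rightarrow> real \<Rightarrow> real" where
  "drift n m t = (\<Sum>i\<in>{0..K}. \<Sum>m'\<le>c. La (int i) m m' * F n m' t)
     + (\<Sum>k\<in>{1..n}. \<Sum>m'\<le>c. La (- int k) m m' * F (n - k) m' t)"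

lemma has_real_derivative_drift:
  "m \<le> c \<Longrightarrow> 0 \<le> t \<Longrightarrow> (F n m has_real_derivative drift n m t) (at t within {0..})"
  unfolding drift_def by (rule ode)

definition block_norm :: "int \<Rightarrow> real" where
  "block_norm k = (\<Sum>m\<le>c. \<Sum>m'\<le>c. \<bar>La k m m'\<bar>)"

definition growth_rate :: real where
  "growth_rate = 2 * (\<Sum>i\<in>{0..K}. block_norm (int i)) + 2 * (\<Sum>k. block_norm (- int (Suc k)))"

lemma block_norm_nonneg: "0 \<le> block_norm k"
  unfolding block_norm_def by (intro sum_nonneg) auto

lemma lower_block_sum_le: "(\<Sum>k\<in>{1..n}. block_norm (- int k)) \<le> (\<Sum>k. block_norm (- int (Suc k)))"
proof -
  have "(\<Sum>k\<in>{1..n}. block_norm (- int k)) = (\<Sum>k<n. block_norm (- int (Suc k)))"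
    by (simp add: sum.atLeast1_atMost_eq)
  also have "\<dots> \<le> (\<Sum>k. block_norm (- int (Suc k)))"
    using lower_summable unfolding block_norm_def[symmetric]
    by (rule sum_le_suminf) (auto intro: block_norm_nonneg)
  finally show ?thesis .
qed

lemma growth_rate_nonneg: "0 \<le> growth_rate"
  unfolding growth_rate_def using lower_summable
  by (auto intro!: add_nonneg_nonneg sum_nonneg suminf_nonneg block_norm_nonneg
      simp: block_norm_def[symmetric])

text \<open>The lower-triangular coupling costs at most the total mass of the lower blocks, by a
  discrete Young inequality for the convolution.\<close>
lemma energy_derivative_le:
  "(\<Sum>n\<le>N. \<Sum>m\<le>c. 2 * F n m t * drift n m t) \<le> growth_rate * (\<Sum>n\<le>N. \<Sum>m\<le>c. (F n m t)\<^sup>2)"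
proof -
  define G where "G n = (\<Sum>m\<le>c. (F n m t)\<^sup>2)" for n
  define aa where "aa = (\<Sum>i\<in>{0..K}. block_norm (int i))"
  define \<rho> where "\<rho> = (\<Sum>k. block_norm (- int (Suc k)))"
  have G_nonneg: "0 \<le> G n" for n unfolding G_def by (intro sum_nonneg) auto
  have level: "(\<Sum>m\<le>c. 2 * F n m t * drift n m t) \<le> (2 * aa + \<rho>) * G n + (\<Sum>k\<in>{1..n}. block_norm (- int k) * G (n - k))" for n
  proof -
    have "(\<Sum>m\<le>c. 2 * F n m t * drift n m t)
      = (\<Sum>i\<in>{0..K}. 2 * (\<Sum>m\<le>c. F n m t * (\<Sum>m'\<le>c. La (int i) m m' * F n m' t)))
      + (\<Sum>k\<in>{1..n}. 2 * (\<Sum>m\<le>c. F n m t * (\<Sum>m'\<le>c. La (- int k) m m' * F (n - k) m' t)))"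
      unfolding drift_def
      by (simp add: sum_distrib_left sum_distrib_right sum.distrib algebra_simps
          sum.swap[of _ "{0..K}"] sum.swap[of _ "{..c}" "{Suc 0..n}"])
    also have "\<dots> \<le> (\<Sum>i\<in>{0..K}. block_norm (int i) * (G n + G n))
        + (\<Sum>k\<in>{1..n}. block_norm (- int k) * (G n + G (n - k)))"
      unfolding G_def block_norm_def by (intro add_mono sum_mono bilinear_le_abs_sum_squares)
    also have "\<dots> = 2 * aa * G n + (\<Sum>k\<in>{1..n}. block_norm (- int k)) * G n
        + (\<Sum>k\<in>{1..n}. block_norm (- int k) * G (n - k))"
      unfolding aa_def by (simp add: sum_distrib_left sum_distrib_right sum.distrib algebra_simps)
    also have "\<dots> \<le> 2 * aa * G n + \<rho> * G n + (\<Sum>k\<in>{1..n}. block_norm (- int k) * G (n - k))"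
      unfolding \<rho>_def using lower_block_sum_le G_nonneg
      by (intro add_mono order_refl mult_right_mono) auto
    finally show ?thesis by (simp add: algebra_simps)
  qed
  have "(\<Sum>n\<le>N. \<Sum>m\<le>c. 2 * F n m t * drift n m t) \<le> (\<Sum>n\<le>N. (2 * aa + \<rho>) * G n + (\<Sum>k\<in>{1..n}. block_norm (- int k) * G (n - k)))"
    by (intro sum_mono level)
  also have "\<dots> = (2 * aa + \<rho>) * (\<Sum>n\<le>N. G n) + (\<Sum>n\<le>N. \<Sum>k\<in>{1..n}. block_norm (- int k) * G (n - k))"
    by (simp add: sum.distrib sum_distrib_left)
  also have "\<dots> \<le> (2 * aa + \<rho>) * (\<Sum>n\<le>N. G n) + (\<Sum>k\<in>{1..N}. block_norm (- int k)) * (\<Sum>n\<le>N. G n)"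
    by (intro add_mono order_refl convolution_sum_le block_norm_nonneg G_nonneg)
  also have "\<dots> \<le> (2 * aa + \<rho>) * (\<Sum>n\<le>N. G n) + \<rho> * (\<Sum>n\<le>N. G n)"
    unfolding \<rho>_def using lower_block_sum_le G_nonneg
    by (intro add_mono order_refl mult_right_mono sum_nonneg) auto
  finally show ?thesis unfolding growth_rate_def aa_def \<rho>_def G_def by (simp add: algebra_simps)
qed

lemma energy_bound:
  assumes "0 \<le> t"
  shows "(\<Sum>n\<le>N. \<Sum>m\<le>c. (F n m t)\<^sup>2) \<le> (real N + 1) * (real c + 1) * exp (growth_rate * t)"
proof -
  have "(\<Sum>n\<le>N. \<Sum>m\<le>c. (F n m t)\<^sup>2) \<le> (\<Sum>n\<le>N. \<Sum>m\<le>c. (F n m 0)\<^sup>2) * exp (growth_rate * t)"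
  proof (rule exp_growth_bound[OF _ energy_derivative_le assms])
    fix s :: real assume "0 \<le> s"
    then show "((\<lambda>s. \<Sum>n\<le>N. \<Sum>m\<le>c. (F n m s)\<^sup>2) has_real_derivative
        (\<Sum>n\<le>N. \<Sum>m\<le>c. 2 * F n m s * drift n m s)) (at s within {0..})"
      by (intro DERIV_sum) (auto intro!: derivative_eq_intros has_real_derivative_drift simp: mult_ac)
  qed
  also have "(\<Sum>n\<le>N. \<Sum>m\<le>c. (F n m 0)\<^sup>2) = (real N + 1) * (real c + 1)"
    using init by (simp add: add.commute)
  finally show ?thesis .
qed

lemma growth_bound:
  assumes "m \<le> c" and "0 \<le> t"
  shows "\<bar>F n m t\<bar> \<le> (real n + 1) * (real c + 1) * exp (growth_rate * t)"
proof -
  define X where "X = (real n + 1) * (real c + 1) * exp (growth_rate * t)"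
  have "1 * 1 * 1 \<le> X"
    unfolding X_def using assms growth_rate_nonneg by (intro mult_mono) auto
  then have X: "1 \<le> X" by simp
  have "(F n m t)\<^sup>2 \<le> (\<Sum>n'\<le>n. \<Sum>m\<le>c. (F n' m t)\<^sup>2)"
    using assms(1)
    by (intro order.trans[OF member_le_sum[where f="\<lambda>m. (F n m t)\<^sup>2"]
          member_le_sum[where f="\<lambda>n'. \<Sum>m\<le>c. (F n' m t)\<^sup>2"]]) (auto intro: sum_nonneg)
  also have "\<dots> \<le> X" unfolding X_def by (rule energy_bound[OF assms(2)])
  also have "\<dots> \<le> X\<^sup>2" using X by (simp add: power2_eq_square)
  finally have "\<bar>F n m t\<bar>\<^sup>2 \<le> X\<^sup>2" by simp
  then show ?thesis unfolding X_def[symmetric] by (rule power2_le_imp_le) (use X in auto)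
qed

end

section \<open>Generating series along a geometric row vector\<close>

lemma sum_triangle_swap:
  fixes g :: "nat \<Rightarrow> nat \<Rightarrow> 'a::comm_monoid_add"
  shows "(\<Sum>n<N. \<Sum>k\<le>n. g k (n - k)) = (\<Sum>p<N. \<Sum>k<N - p. g k p)"
proof -
  have "(\<Sum>n<N. \<Sum>k\<le>n. g k (n - k)) = (\<Sum>(k, p)\<in>{(k, p). k + p < N}. g k p)"
    by (rule sum.triangle_reindex[symmetric])
  also have "\<dots> = (\<Sum>(p, k)\<in>(SIGMA p:{..<N}. {..<N - p}). g k p)"
    by (rule sum.reindex_bij_witness[where i="\<lambda>(p, k). (k, p)" and j="\<lambda>(k, p). (p, k)"]) auto
  also have "\<dots> = (\<Sum>p<N. \<Sum>k<N - p. g k p)"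
    by (rule sum.Sigma[symmetric]) auto
  finally show ?thesis .
qed

lemma sum_row_times_blocks:
  fixes w :: "'m \<Rightarrow> 'a::comm_semiring_1"
  shows "(\<Sum>m\<in>A. w m * (\<Sum>i\<in>I. \<Sum>m'\<in>B. L i m m' * g i m'))
    = (\<Sum>i\<in>I. \<Sum>m'\<in>B. (\<Sum>m\<in>A. w m * L i m m') * g i m')"
proof -
  have "(\<Sum>m\<in>A. w m * (\<Sum>i\<in>I. \<Sum>m'\<in>B. L i m m' * g i m'))
      = (\<Sum>m\<in>A. \<Sum>i\<in>I. \<Sum>m'\<in>B. w m * L i m m' * g i m')"
    by (simp add: sum_distrib_left mult.assoc)
  also have "\<dots> = (\<Sum>i\<in>I. \<Sum>m'\<in>B. \<Sum>m\<in>A. w m * L i m m' * g i m')"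
    by (subst sum.swap) (simp only: sum.swap[of _ A B])
  finally show ?thesis by (simp add: sum_distrib_right)
qed

lemma poly_times_geometric_tendsto_0:
  fixes q :: real assumes "0 \<le> q" "q < 1"
  shows "(\<lambda>n. (real n)\<^sup>2 * q ^ n) \<longlonglongrightarrow> 0"
proof -
  have s: "norm (sqrt q) < 1" using assms by (simp add: real_sqrt_lt_1_iff)
  have "(\<lambda>n. (real n * sqrt q ^ n) * (real n * sqrt q ^ n)) \<longlonglongrightarrow> 0 * 0"
    by (intro tendsto_mult powser_times_n_limit_0 s)
  moreover have "(real n * sqrt q ^ n) * (real n * sqrt q ^ n) = (real n)\<^sup>2 * q ^ n" for n
    using assms by (simp add: power2_eq_square power_mult_distrib[symmetric] mult_ac)
  ultimately show ?thesis by simp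
qed

text \<open>The assumptions make the row vector (b^n w)_n turn the level ODE into the scalar ODE
  G' = rate G for G = \<Sum>n. b^n w F_n.\<close>
locale geometric_row = level_ode +
  fixes b :: complex and w :: "nat \<Rightarrow> complex" and lam :: "nat \<Rightarrow> real"
  assumes norm_b: "norm b < 1"
    and upper_blocks: "\<And>i m m'. i \<in> {1..K} \<Longrightarrow> m \<le> c \<Longrightarrow> m' \<le> c \<Longrightarrow>
      La (int i) m m' = (if m = m' then lam i else 0)"
    and lower_blocks_sums: "\<And>m'. m' \<le> c \<Longrightarrow>
      (\<lambda>k. b ^ k * (\<Sum>m\<le>c. w m * of_real (La (- int k) m m')))
        sums (- (\<Sum>i\<in>{1..K}. of_real (lam i) / b ^ i) * w m')"
begin

definition col :: "nat \<Rightarrow> nat \<Rightarrow> complex" where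
  "col m' k = (\<Sum>m\<le>c. w m * of_real (La (- int k) m m'))"

definition tail :: "nat \<Rightarrow> nat \<Rightarrow> complex" where
  "tail M m' = (\<Sum>k. b ^ (k + M) * col m' (k + M))"

definition col_mass :: real where
  "col_mass = (\<Sum>m'\<le>c. \<Sum>k. norm (col m' k))"

definition rem_coeff :: "real \<Rightarrow> real" where
  "rem_coeff t = (real c + 1)\<^sup>2 * col_mass * exp (growth_rate * t)"

definition rate :: complex where
  "rate = (\<Sum>i\<in>{1..K}. (1 - 1 / b ^ i) * of_real (lam i))"

definition psum :: "nat \<Rightarrow> real \<Rightarrow> complex" where
  "psum N s = (\<Sum>n<N. \<Sum>m\<le>c. b ^ n * w m * of_real (F n m s))"

text \<open>Truncating at level N cuts the kernel series of the levels p < N after N - p terms;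
  rem collects the resulting tails.\<close>
definition rem :: "nat \<Rightarrow> real \<Rightarrow> complex" where
  "rem N s = (\<Sum>p<N. b ^ p * (\<Sum>m'\<le>c. tail (N - p) m' * of_real (F p m' s)))"

lemma summable_norm_col:
  assumes "m' \<le> c"
  shows "summable (\<lambda>k. norm (col m' k))"
proof -
  define W where "W = (\<Sum>m\<le>c. norm (w m))"
  have "summable (\<lambda>k. block_norm (- int k))"
    by (rule summable_Suc_iff[THEN iffD1]) (use lower_summable in \<open>simp add: block_norm_def\<close>)
  then have summable_W: "summable (\<lambda>k. W * block_norm (- int k))" by (rule summable_mult)
  have bound: "norm (col m' k) \<le> W * block_norm (- int k)" for k
  proof -
    have "norm (col m' k) \<le> (\<Sum>m\<le>c. W * (\<Sum>m''\<le>c. \<bar>La (- int k) m m''\<bar>))"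
      unfolding col_def
    proof (rule sum_norm_le)
      fix m assume "m \<in> {..c}"
      then have "norm (w m) \<le> W" "\<bar>La (- int k) m m'\<bar> \<le> (\<Sum>m''\<le>c. \<bar>La (- int k) m m''\<bar>)"
        unfolding W_def using assms by (auto intro: member_le_sum)
      then show "norm (w m * of_real (La (- int k) m m')) \<le> W * (\<Sum>m''\<le>c. \<bar>La (- int k) m m''\<bar>)"
        unfolding norm_mult norm_of_real by (intro mult_mono) (auto simp: W_def intro: sum_nonneg)
    qed
    then show ?thesis unfolding block_norm_def by (simp add: sum_distrib_left)
  qed
  show ?thesis
    by (rule summable_comparison_test'[OF summable_W, where N=0]) (simp add: bound)
qed

lemma col_mass_nonneg: "0 \<le> col_mass"
  unfolding col_mass_def using summable_norm_col by (intro sum_nonneg suminf_nonneg) auto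

lemma col_partial_sum:
  assumes "m' \<le> c"
  shows "(\<Sum>k<M. b ^ k * col m' k) = - (\<Sum>i\<in>{1..K}. of_real (lam i) / b ^ i) * w m' - tail M m'"
proof -
  have sums: "(\<lambda>k. b ^ k * col m' k) sums (- (\<Sum>i\<in>{1..K}. of_real (lam i) / b ^ i) * w m')"
    using lower_blocks_sums[OF assms] unfolding col_def .
  have "(\<Sum>k. b ^ k * col m' k) = tail M m' + (\<Sum>k<M. b ^ k * col m' k)"
    unfolding tail_def by (rule suminf_split_initial_segment[OF sums_summable[OF sums]])
  then show ?thesis
    using sums_unique[OF sums] by (simp add: algebra_simps)
qed

lemma norm_tail_le:
  assumes "m' \<le> c"
  shows "norm (tail M m') \<le> norm b ^ M * col_mass"
proof -
  have zs: "summable (\<lambda>k. norm (col m' (k + M)))"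
    using summable_norm_col[OF assms] by (rule summable_ignore_initial_segment)
  have le: "norm (b ^ (k + M) * col m' (k + M)) \<le> norm b ^ M * norm (col m' (k + M))" for k
    using norm_b by (simp add: norm_mult norm_power power_add mult_left_le_one_le power_le_one
        mult_right_mono)
  have sm: "summable (\<lambda>k. norm (b ^ (k + M) * col m' (k + M)))"
    by (rule summable_comparison_test'[OF summable_mult[OF zs]]) (use le in auto)
  have "norm (tail M m') \<le> (\<Sum>k. norm b ^ M * norm (col m' (k + M)))"
    unfolding tail_def
    by (rule order.trans[OF summable_norm[OF sm] suminf_le[OF le sm summable_mult[OF zs]]])
  also have "\<dots> = norm b ^ M * (\<Sum>k. norm (col m' (k + M)))" by (rule suminf_mult[OF zs])
  also have "\<dots> \<le> norm b ^ M * col_mass"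
  proof (rule mult_left_mono)
    have "(\<Sum>k. norm (col m' (k + M))) \<le> (\<Sum>k. norm (col m' k))"
      using suminf_split_initial_segment[OF summable_norm_col[OF assms], of M]
      by (simp add: sum_nonneg)
    also have "\<dots> \<le> col_mass"
      unfolding col_mass_def using assms summable_norm_col
      by (intro member_le_sum[where f="\<lambda>m'. \<Sum>k. norm (col m' k)"]) (auto intro: suminf_nonneg)
    finally show "(\<Sum>k. norm (col m' (k + M))) \<le> col_mass" .
  qed simp
  finally show ?thesis .
qed

lemma upper_block_col:
  assumes "i \<in> {1..K}" and "m' \<le> c"
  shows "(\<Sum>m\<le>c. w m * of_real (La (int i) m m')) = of_real (lam i) * w m'"
proof -
  have "(\<Sum>m\<le>c. w m * of_real (La (int i) m m')) = (\<Sum>m\<le>c. if m = m' then of_real (lam i) * w m else 0)"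
    using assms by (intro sum.cong) (auto simp: upper_blocks)
  also have "\<dots> = of_real (lam i) * w m'" using assms(2) by (simp add: sum.delta')
  finally show ?thesis .
qed

lemma level_drift:
  "(\<Sum>m\<le>c. w m * of_real (drift n m s))
   = (\<Sum>k\<le>n. \<Sum>m'\<le>c. col m' k * of_real (F (n - k) m' s))
     + (\<Sum>i\<in>{1..K}. of_real (lam i)) * (\<Sum>m'\<le>c. w m' * of_real (F n m' s))"
proof -
  have zero_insert: "{0..K} = insert 0 {1..K}" "{..n} = insert 0 {1..n}"
    by (auto simp: not_less_eq_eq)
  have upper: "(\<Sum>m\<le>c. w m * (\<Sum>i\<in>{0..K}. \<Sum>m'\<le>c. of_real (La (int i) m m') * of_real (F n m' s)))
     = (\<Sum>m'\<le>c. col m' 0 * of_real (F n m' s))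
       + (\<Sum>i\<in>{1..K}. \<Sum>m'\<le>c. of_real (lam i) * w m' * of_real (F n m' s))"
    unfolding sum_row_times_blocks zero_insert(1) col_def
    by (simp add: upper_block_col mult_ac)
  have lower: "(\<Sum>m\<le>c. w m * (\<Sum>k\<in>{1..n}. \<Sum>m'\<le>c. of_real (La (- int k) m m') * of_real (F (n - k) m' s)))
     = (\<Sum>k\<in>{1..n}. \<Sum>m'\<le>c. col m' k * of_real (F (n - k) m' s))"
    unfolding sum_row_times_blocks col_def ..
  show ?thesis
    unfolding drift_def of_real_add of_real_sum of_real_mult distrib_left sum.distrib upper lower
      zero_insert(2)
    by (simp add: sum_distrib_left sum_distrib_right mult_ac sum.swap[of _ "{Suc 0..K}"])
qed

lemma psum_drift:
  "(\<Sum>n<N. \<Sum>m\<le>c. b ^ n * w m * of_real (drift n m s)) = rate * psum N s - rem N s"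
proof -
  define \<Lambda> where "\<Lambda> = (\<Sum>i\<in>{1..K}. complex_of_real (lam i))"
  define \<nu> where "\<nu> = (\<Sum>i\<in>{1..K}. complex_of_real (lam i) / b ^ i)"
  have "(\<Sum>n<N. \<Sum>m\<le>c. b ^ n * w m * of_real (drift n m s))
      = (\<Sum>n<N. \<Sum>k\<le>n. b ^ k * b ^ (n - k) * (\<Sum>m'\<le>c. col m' k * of_real (F (n - k) m' s)))
        + \<Lambda> * psum N s"
  proof -
    have "b ^ n * (\<Sum>m\<le>c. w m * of_real (drift n m s))
        = (\<Sum>k\<le>n. b ^ k * b ^ (n - k) * (\<Sum>m'\<le>c. col m' k * of_real (F (n - k) m' s)))
          + \<Lambda> * (\<Sum>m\<le>c. b ^ n * w m * of_real (F n m s))" for n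
      unfolding level_drift \<Lambda>_def
      by (simp add: distrib_left sum_distrib_left mult_ac flip: power_add)
    then show ?thesis
      unfolding psum_def by (simp add: sum_distrib_left sum.distrib mult.assoc)
  qed
  also have "(\<Sum>n<N. \<Sum>k\<le>n. b ^ k * b ^ (n - k) * (\<Sum>m'\<le>c. col m' k * of_real (F (n - k) m' s)))
      = (\<Sum>p<N. b ^ p * (\<Sum>m'\<le>c. (\<Sum>k<N - p. b ^ k * col m' k) * of_real (F p m' s)))"
    unfolding sum_triangle_swap[where g="\<lambda>k p. b ^ k * b ^ p * (\<Sum>m'\<le>c. col m' k * of_real (F p m' s))"]
    by (simp add: sum_distrib_left sum_distrib_right mult_ac sum.swap[of _ "{..<_}" "{..c}"])
  also have "\<dots> = (\<Sum>p<N. b ^ p * (\<Sum>m'\<le>c. (- \<nu> * w m' - tail (N - p) m') * of_real (F p m' s)))"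
    unfolding \<nu>_def by (intro sum.cong refl arg_cong2[where f="(*)"]) (simp_all add: col_partial_sum)
  also have "\<dots> = - \<nu> * psum N s - rem N s"
    unfolding psum_def rem_def
    by (simp add: algebra_simps sum_distrib_left sum.distrib sum_subtractf)
  finally show ?thesis
    unfolding rate_def \<Lambda>_def \<nu>_def by (simp add: algebra_simps sum_subtractf)
qed

lemma psum_has_vector_derivative:
  assumes "0 \<le> s"
  shows "(psum N has_vector_derivative (rate * psum N s - rem N s)) (at s within {0..})"
proof -
  have "(psum N has_vector_derivative (\<Sum>n<N. \<Sum>m\<le>c. b ^ n * w m * of_real (drift n m s)))
      (at s within {0..})"
    unfolding psum_def using assms
    by (intro has_vector_derivative_sum has_vector_derivative_mult_right
        has_vector_derivative_of_real has_real_derivative_drift) auto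
  then show ?thesis unfolding psum_drift .
qed

lemma norm_rem_le:
  assumes "0 \<le> s" and "s \<le> t"
  shows "norm (rem N s) \<le> (real N)\<^sup>2 * norm b ^ N * rem_coeff t"
proof -
  have summand_le: "norm (b ^ p * (\<Sum>m'\<le>c. tail (N - p) m' * of_real (F p m' s))) \<le> norm b ^ N * (rem_coeff t * real N)"
    if p: "p < N" for p
  proof -
    have "norm (tail (N - p) m' * of_real (F p m' s))
        \<le> norm b ^ (N - p) * col_mass * (real N * (real c + 1) * exp (growth_rate * t))"
      if "m' \<le> c" for m'
    proof -
      have "\<bar>F p m' s\<bar> \<le> (real p + 1) * (real c + 1) * exp (growth_rate * s)"
        using growth_bound that assms by auto
      also have "\<dots> \<le> real N * (real c + 1) * exp (growth_rate * t)"
        using p assms growth_rate_nonneg by (intro mult_mono) (auto intro: mult_left_mono)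
      finally show ?thesis
        unfolding norm_mult norm_of_real
        using norm_tail_le[OF that] col_mass_nonneg by (intro mult_mono) auto
    qed
    then have "norm (\<Sum>m'\<le>c. tail (N - p) m' * of_real (F p m' s))
        \<le> (\<Sum>m'\<le>c. norm b ^ (N - p) * col_mass * (real N * (real c + 1) * exp (growth_rate * t)))"
      by (intro sum_norm_le) auto
    also have "\<dots> = (real c + 1) * (norm b ^ (N - p) * col_mass * (real N * (real c + 1) * exp (growth_rate * t)))"
      by simp
    finally have "norm (b ^ p * (\<Sum>m'\<le>c. tail (N - p) m' * of_real (F p m' s)))
        \<le> norm b ^ p * ((real c + 1) * (norm b ^ (N - p) * col_mass * (real N * (real c + 1) * exp (growth_rate * t))))"
      unfolding norm_mult norm_power by (intro mult_left_mono) auto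
    also have "\<dots> = norm b ^ (p + (N - p)) * (rem_coeff t * real N)"
      unfolding rem_coeff_def by (simp add: power_add power2_eq_square mult_ac)
    finally show ?thesis using p by simp
  qed
  have "norm (rem N s) \<le> (\<Sum>p<N. norm b ^ N * (rem_coeff t * real N))"
    unfolding rem_def by (rule sum_norm_le) (use summand_le in auto)
  also have "\<dots> = (real N)\<^sup>2 * norm b ^ N * rem_coeff t"
    by (simp add: power2_eq_square mult_ac)
  finally show ?thesis .
qed

lemma norm_scaled_psum_increment_le:
  assumes "0 \<le> t"
  shows "norm (exp (- (of_real t * rate)) * psum N t - psum N 0)
    \<le> exp (t * norm rate) * ((real N)\<^sup>2 * norm b ^ N * rem_coeff t) * t"
proof -
  define W where "W s = exp (- (of_real s * rate)) * psum N s" for s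
  define W' where "W' s = - (exp (- (of_real s * rate)) * rem N s)" for s
  have deriv: "(W has_vector_derivative W' s) (at s within {0..t})" if s: "s \<in> {0..t}" for s
  proof -
    have "((\<lambda>z. exp (- (z * rate))) has_field_derivative exp (- (of_real s * rate)) * - rate) (at (of_real s))"
      by (auto intro!: derivative_eq_intros)
    from has_vector_derivative_real_field[OF this]
    have "((\<lambda>s. exp (- (of_real s * rate))) has_vector_derivative exp (- (of_real s * rate)) * - rate)
        (at s within {0..})"
      by (rule has_vector_derivative_at_within)
    from has_vector_derivative_mult[OF this psum_has_vector_derivative]
    have "(W has_vector_derivative W' s) (at s within {0..})"
      unfolding W_def W'_def using s by (simp add: algebra_simps)
    then show ?thesis by (rule has_vector_derivative_within_subset) auto
  qed
  have "norm (W' s) \<le> exp (t * norm rate) * ((real N)\<^sup>2 * norm b ^ N * rem_coeff t)"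
    if s: "s \<in> {0..t}" for s
  proof -
    have "norm (exp (- (of_real s * rate))) \<le> exp (t * norm rate)"
      using s complex_Re_le_cmod[of "- (of_real s * rate)"]
      by (auto simp: norm_exp_eq_Re norm_mult intro: order.trans[OF _ mult_right_mono])
    then show ?thesis
      unfolding W'_def norm_minus_cancel norm_mult using s norm_rem_le[of s t N]
      by (intro mult_mono) auto
  qed
  then have "norm (W t - W 0) \<le> exp (t * norm rate) * ((real N)\<^sup>2 * norm b ^ N * rem_coeff t) * norm (t - 0)"
    using assms deriv
    by (intro differentiable_bound[where f'="\<lambda>s h. h *\<^sub>R W' s" and S="{0..t}"])
       (auto simp: has_vector_derivative_def onorm_scaleR_left[OF bounded_linear_ident] onorm_id)
  then show ?thesis unfolding W_def using assms by simp
qed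

lemma generating_series:
  assumes "0 \<le> t"
  shows "(\<Sum>n. \<Sum>m\<le>c. b ^ n * w m * of_real (F n m t)) = (\<Sum>m\<le>c. w m) / (1 - b) * exp (of_real t * rate)"
proof -
  define g where "g n = (\<Sum>m\<le>c. b ^ n * w m * of_real (F n m t))" for n
  define \<epsilon> where "\<epsilon> N = exp (t * norm rate)
      * ((real N)\<^sup>2 * norm b ^ N * rem_coeff t) * t" for N
  define W where "W = (\<Sum>m\<le>c. norm (w m)) * (real c + 1) * exp (growth_rate * t)"
  have g_le: "norm (g n) \<le> W * (real (Suc n) * norm b ^ n)" for n
  proof -
    have "norm (g n) \<le> (\<Sum>m\<le>c. norm b ^ n * norm (w m) * ((real n + 1) * (real c + 1) * exp (growth_rate * t)))"
      unfolding g_def using growth_bound assms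
      by (intro sum_norm_le) (auto simp: norm_mult norm_power intro!: mult_left_mono)
    then show ?thesis unfolding W_def by (simp add: sum_distrib_left sum_distrib_right mult_ac add.commute)
  qed
  have "summable (\<lambda>n. W * (real (Suc n) * norm b ^ n))"
    using sums_summable[OF geometric_deriv_sums[of "norm b"]] norm_b by (intro summable_mult) simp
  then have "summable g"
    by (rule summable_comparison_test'[where N=0]) (use g_le in simp)
  then have "(\<lambda>N. psum N t) \<longlonglongrightarrow> suminf g"
    unfolding psum_def g_def by (rule summable_LIMSEQ)
  moreover have "(\<lambda>N. psum N 0) \<longlonglongrightarrow> (\<Sum>m\<le>c. w m) * (1 / (1 - b))"
  proof -
    have psum_0: "psum N 0 = (\<Sum>m\<le>c. w m) * (\<Sum>n<N. b ^ n)" for N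
      unfolding psum_def using init by (simp add: sum_distrib_left sum_distrib_right mult_ac)
    have "(\<lambda>N. \<Sum>n<N. b ^ n) \<longlonglongrightarrow> 1 / (1 - b)"
      using geometric_sums[OF norm_b] by (simp add: sums_def)
    then show ?thesis unfolding psum_0 by (rule tendsto_mult_left)
  qed
  ultimately have "(\<lambda>N. exp (- (of_real t * rate)) * psum N t - psum N 0)
      \<longlonglongrightarrow> exp (- (of_real t * rate)) * suminf g - (\<Sum>m\<le>c. w m) * (1 / (1 - b))"
    by (intro tendsto_intros)
  moreover have "\<epsilon> \<longlonglongrightarrow> 0"
  proof -
    have "(\<lambda>N. exp (t * norm rate) * ((real N)\<^sup>2 * norm b ^ N) * rem_coeff t * t)
        \<longlonglongrightarrow> exp (t * norm rate) * 0 * rem_coeff t * t"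
      using norm_b by (intro tendsto_intros poly_times_geometric_tendsto_0) auto
    then show ?thesis unfolding \<epsilon>_def by (simp add: mult_ac)
  qed
  ultimately have "norm (exp (- (of_real t * rate)) * suminf g - (\<Sum>m\<le>c. w m) * (1 / (1 - b))) \<le> 0"
    using norm_scaled_psum_increment_le[OF assms]
    by (intro LIMSEQ_le[OF tendsto_norm]) (auto simp: \<epsilon>_def)
  then have "suminf g = exp (of_real t * rate) * ((\<Sum>m\<le>c. w m) * (1 / (1 - b)))"
    by (simp add: exp_minus field_simps)
  then show ?thesis unfolding g_def by (simp add: mult_ac)
qed

end

section \<open>The level matrices\<close>

lemma sums_nonpos_part:
  fixes f :: "int \<Rightarrow> 'a::banach"
  assumes "(f has_sum S) {..int K}"
  shows "(\<lambda>n. f (- int n)) sums (S - (\<Sum>i\<in>{1..K}. f (int i)))"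
proof -
  have split: "{..int K} = {..0} \<union> int ` {1..K}"
  proof (intro equalityI subsetI)
    fix z assume "z \<in> {..int K}"
    then show "z \<in> {..0} \<union> int ` {1..K}"
      by (cases "z \<le> 0") (auto simp: image_iff intro!: bexI[of _ "nat z"])
  qed auto
  have disjoint: "{..0} \<inter> int ` {1..K} = {}" by auto
  have "f summable_on {..0}"
    using has_sum_imp_summable[OF assms] by (rule summable_on_subset_banach) auto
  then have "(f has_sum infsum f {..0}) {..0}" by (rule has_sum_infsum)
  moreover have "(f has_sum (\<Sum>i\<in>{1..K}. f (int i))) (int ` {1..K})"
    using has_sum_finite[of "int ` {1..K}" f] by (simp add: sum.reindex)
  ultimately have "(f has_sum (infsum f {..0} + (\<Sum>i\<in>{1..K}. f (int i)))) {..int K}"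
    unfolding split using disjoint by (rule has_sum_Un_disjoint)
  then have "infsum f {..0} = S - (\<Sum>i\<in>{1..K}. f (int i))"
    using has_sum_unique[OF assms] by (simp add: algebra_simps)
  moreover have "{..0::int} = (\<lambda>n. - int n) ` UNIV"
    by (auto simp: image_iff intro!: exI[of _ "nat (- _)"])
  moreover have "inj (\<lambda>n::nat. - int n)" by (auto simp: inj_def)
  ultimately have "((f \<circ> (\<lambda>n. - int n)) has_sum (S - (\<Sum>i\<in>{1..K}. f (int i)))) UNIV"
    using has_sum_reindex \<open>(f has_sum infsum f {..0}) {..0}\<close> by metis
  then show ?thesis by (intro has_sum_imp_sums) (simp add: comp_def)
qed

lemma summable_on_genf_terms:
  fixes x :: "int \<Rightarrow> real" and b :: complex
  assumes "x summable_on {..int K}" and "norm b \<le> 1"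
  shows "(\<lambda>k. of_real (x k) * b ^ nat (int K - k)) summable_on {..int K}"
proof (rule abs_summable_summable)
  have "(\<lambda>k. \<bar>x k\<bar>) summable_on {..int K}"
    using assms(1) summable_on_iff_abs_summable_on_real by auto
  then show "(\<lambda>k. norm (of_real (x k) * b ^ nat (int K - k))) summable_on {..int K}"
    by (rule summable_on_comparison_test)
       (use assms(2) in \<open>auto simp: norm_mult norm_power mult_left_le power_le_one\<close>)
qed

lemma has_sum_genf:
  assumes "x summable_on {..int K}" and "norm b \<le> 1"
  shows "((\<lambda>k. of_real (x k) * b ^ nat (int K - k)) has_sum genf K x b) {..int K}"
  unfolding genf_def using summable_on_genf_terms[OF assms] by (rule has_sum_infsum)

lemma genf_at_0: "genf K x 0 = of_real (x (int K))"
proof -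
  have "genf K x 0 = infsum (\<lambda>k. of_real (x k) * (0::complex) ^ nat (int K - k)) {int K}"
    unfolding genf_def by (rule infsum_cong_neutral) auto
  then show ?thesis by simp
qed

lemma Lam_column:
  fixes w :: "nat \<Rightarrow> complex"
  assumes "w (Suc c) = 0" and "m' \<le> c"
  shows "(\<Sum>m\<le>c. w m * of_real (Lam c K ra rb rc rd k m m'))
    = of_real (ra k) * ((of_nat c - of_nat m' + 1) * (if m' = 0 then 0 else w (m' - 1)))
      + of_real (rd k) * ((of_nat m' + 1) * w (m' + 1))
      + of_real (rb k) * ((of_nat c - of_nat m') * w m') + of_real (rc k) * (of_nat m' * w m')
      - (if k = 0 then of_real (infsum (\<lambda>l. (ra l + rb l) * (real c - real m') + (rc l + rd l) * real m') {..int K})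
         else 0) * w m'"
proof -
  define dg where "dg m = rb k * (real c - real m) + rc k * real m
        - (if k = 0 then infsum (\<lambda>l. (ra l + rb l) * (real c - real m) + (rc l + rd l) * real m) {..int K} else 0)" for m
  have entry: "w m * of_real (Lam c K ra rb rc rd k m m') =
      (if m' \<noteq> 0 \<and> m = m' - 1 then w m * of_real (ra k * (real c - real m)) else 0)
    + (if m = m' + 1 then w m * of_real (rd k * real m) else 0)
    + (if m = m' then w m * of_real (dg m) else 0)" for m
    unfolding Lam_def dg_def by auto
  have up: "(\<Sum>m\<le>c. if m' \<noteq> 0 \<and> m = m' - 1 then w m * of_real (ra k * (real c - real m)) else 0)
      = of_real (ra k) * ((of_nat c - of_nat m' + 1) * (if m' = 0 then 0 else w (m' - 1)))"
    using assms(2) by (cases "m' = 0") (auto simp: sum.delta of_nat_diff algebra_simps)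
  have down: "(\<Sum>m\<le>c. if m = m' + 1 then w m * of_real (rd k * real m) else 0)
      = of_real (rd k) * ((of_nat m' + 1) * w (m' + 1))"
    using assms by (cases "m' = c") (auto simp: sum.delta algebra_simps)
  have stay: "(\<Sum>m\<le>c. if m = m' then w m * of_real (dg m) else 0) = w m' * of_real (dg m')"
    using assms(2) by (simp add: sum.delta)
  show ?thesis
    unfolding entry sum.distrib up down stay dg_def using assms(2) by (simp add: algebra_simps of_nat_diff)
qed

text \<open>Weighting by b^(K - k) turns the rates into their generating functions, and the diagonal
  correction of Lam 0 contributes b^K times the total rates.\<close>
lemma has_sum_Lam_column:
  fixes w :: "nat \<Rightarrow> complex" and b :: complex
  assumes sa: "ra summable_on {..int K}" and sb: "rb summable_on {..int K}"
    and sc: "rc summable_on {..int K}" and sd: "rd summable_on {..int K}"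
    and b: "norm b \<le> 1" and w: "w (Suc c) = 0" and m': "m' \<le> c"
  shows "((\<lambda>k. b ^ nat (int K - k) * (\<Sum>m\<le>c. w m * of_real (Lam c K ra rb rc rd k m m'))) has_sum
      bd_vecmult (genf K ra b) (genf K rb b - b ^ K * of_real (genf1 K ra + genf1 K rb))
        (genf K rc b - b ^ K * of_real (genf1 K rc + genf1 K rd)) (genf K rd b) c w m') {..int K}"
proof -
  define \<alpha> where "\<alpha> = (of_nat c - of_nat m' + 1) * (if m' = 0 then 0 else w (m' - 1))"
  define \<delta> where "\<delta> = (of_nat m' + 1) * w (m' + 1)"
  define \<beta> where "\<beta> = (of_nat c - of_nat m') * w m'"
  define \<gamma> where "\<gamma> = of_nat m' * w m'"
  define T where "T = infsum (\<lambda>l. (ra l + rb l) * (real c - real m') + (rc l + rd l) * real m') {..int K}"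
  define v where "v = - (b ^ K * of_real T * w m')"
  have T: "T = (genf1 K ra + genf1 K rb) * (real c - real m') + (genf1 K rc + genf1 K rd) * real m'"
    unfolding T_def genf1_def
    by (intro infsumI has_sum_add has_sum_cmult_left has_sum_infsum sa sb sc sd)
  have "((\<lambda>k. if k = 0 then v else 0) has_sum v) {..int K}"
    using has_sum_cong_neutral[where S="{..int K}" and T="{0}"
        and f="\<lambda>k. if k = 0 then v else 0" and g="\<lambda>k. if k = 0 then v else 0"]
      has_sum_finite[of "{0}" "\<lambda>k. if k = 0 then v else 0"] by auto
  then have hs: "((\<lambda>k. \<alpha> * (of_real (ra k) * b ^ nat (int K - k)) + \<delta> * (of_real (rd k) * b ^ nat (int K - k))
      + \<beta> * (of_real (rb k) * b ^ nat (int K - k)) + \<gamma> * (of_real (rc k) * b ^ nat (int K - k))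
      + (if k = 0 then v else 0))
      has_sum (\<alpha> * genf K ra b + \<delta> * genf K rd b + \<beta> * genf K rb b + \<gamma> * genf K rc b + v)) {..int K}"
    by (intro has_sum_add has_sum_cmult_right has_sum_genf b sa sb sc sd)
  have sum_value: "\<alpha> * genf K ra b + \<delta> * genf K rd b + \<beta> * genf K rb b + \<gamma> * genf K rc b + v
      = bd_vecmult (genf K ra b) (genf K rb b - b ^ K * of_real (genf1 K ra + genf1 K rb))
        (genf K rc b - b ^ K * of_real (genf1 K rc + genf1 K rd)) (genf K rd b) c w m'"
    unfolding bd_vecmult_def \<alpha>_def \<delta>_def \<beta>_def \<gamma>_def v_def T using m'
    by (simp add: algebra_simps of_nat_diff)
  show ?thesis
    unfolding Lam_column[where w=w and c=c and K=K and ra=ra and rb=rb and rc=rc and rd=rd, OF w m'] \<alpha>_def[symmetric] \<delta>_def[symmetric] \<beta>_def[symmetric]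
      \<gamma>_def[symmetric] T_def[symmetric]
    unfolding sum_value[symmetric] using hs
    by (rule has_sum_cong[THEN iffD1, rotated]) (auto simp: v_def algebra_simps)
qed

lemma Lam_lower_blocks_sums:
  fixes w :: "nat \<Rightarrow> complex" and b :: complex
  assumes sa: "ra summable_on {..int K}" and sb: "rb summable_on {..int K}"
    and sc: "rc summable_on {..int K}" and sd: "rd summable_on {..int K}"
    and b: "norm b < 1" "b \<noteq> 0" and w: "w (Suc c) = 0" and m': "m' \<le> c"
    and upper: "\<And>i m. i \<in> {1..K} \<Longrightarrow> m \<le> c \<Longrightarrow>
      Lam c K ra rb rc rd (int i) m m' = (if m = m' then lam i else 0)"
    and eigen: "bd_vecmult (genf K ra b) (genf K rb b - b ^ K * of_real (genf1 K ra + genf1 K rb))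
        (genf K rc b - b ^ K * of_real (genf1 K rc + genf1 K rd)) (genf K rd b) c w m' = 0"
  shows "(\<lambda>k. b ^ k * (\<Sum>m\<le>c. w m * of_real (Lam c K ra rb rc rd (- int k) m m')))
    sums (- (\<Sum>i\<in>{1..K}. of_real (lam i) / b ^ i) * w m')"
proof -
  define col where "col k = (\<Sum>m\<le>c. w m * of_real (Lam c K ra rb rc rd k m m'))" for k
  have upper_col: "col (int i) = of_real (lam i) * w m'" if "i \<in> {1..K}" for i
  proof -
    have "col (int i) = (\<Sum>m\<le>c. if m = m' then of_real (lam i) * w m else 0)"
      unfolding col_def using that by (intro sum.cong) (auto simp: upper)
    then show ?thesis using m' by (simp add: sum.delta')
  qed
  have nonpos: "(\<lambda>n. b ^ nat (int K - - int n) * col (- int n))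
      sums (0 - (\<Sum>i\<in>{1..K}. b ^ nat (int K - int i) * col (int i)))"
    using has_sum_Lam_column[where w=w and b=b, OF sa sb sc sd _ w m'] b eigen
    unfolding col_def[symmetric] by (intro sums_nonpos_part) simp
  have shift: "b ^ nat (int K - - int n) * col (- int n) = b ^ n * col (- int n) * b ^ K" for n
    by (simp add: power_add mult_ac flip: of_nat_add)
  have upper_sum: "(\<Sum>i\<in>{1..K}. b ^ nat (int K - int i) * col (int i))
      = (\<Sum>i\<in>{1..K}. of_real (lam i) * b ^ (K - i)) * w m'"
    unfolding sum_distrib_right by (intro sum.cong refl) (simp add: upper_col flip: of_nat_diff)
  have "(\<lambda>n. b ^ n * col (- int n) * b ^ K / b ^ K)
      sums ((0 - (\<Sum>i\<in>{1..K}. of_real (lam i) * b ^ (K - i)) * w m') / b ^ K)"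
    using nonpos unfolding shift upper_sum by (rule sums_divide)
  moreover have "(\<Sum>i\<in>{1..K}. of_real (lam i) * b ^ (K - i)) * w m' / b ^ K
      = (\<Sum>i\<in>{1..K}. of_real (lam i) / b ^ i) * w m'"
  proof -
    have "(\<Sum>i\<in>{1..K}. of_real (lam i) * b ^ (K - i)) / b ^ K = (\<Sum>i\<in>{1..K}. of_real (lam i) / b ^ i)"
      unfolding sum_divide_distrib using b(2)
      by (intro sum.cong refl) (simp add: field_simps flip: power_add)
    then show ?thesis by (metis times_divide_eq_left)
  qed
  ultimately show ?thesis unfolding col_def using b(2) by simp
qed

lemma abs_Lam_le:
  assumes "k \<noteq> 0" and "m \<le> c"
  shows "\<bar>Lam c K ra rb rc rd k m m'\<bar> \<le> real c * (\<bar>ra k\<bar> + \<bar>rb k\<bar> + \<bar>rc k\<bar> + \<bar>rd k\<bar>)"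
proof -
  have "\<bar>real c - real m\<bar> \<le> real c" "\<bar>real m\<bar> \<le> real c" using assms(2) by auto
  then have up: "\<bar>x * (real c - real m)\<bar> \<le> real c * \<bar>x\<bar>" and down: "\<bar>x * real m\<bar> \<le> real c * \<bar>x\<bar>" for x
    by (simp_all add: abs_mult mult.commute mult_left_mono)
  have stay: "\<bar>rb k * (real c - real m) + rc k * real m\<bar> \<le> real c * \<bar>rb k\<bar> + real c * \<bar>rc k\<bar>"
    using abs_triangle_ineq add_mono[OF up down] order_trans by blast
  let ?S = "real c * (\<bar>ra k\<bar> + \<bar>rb k\<bar> + \<bar>rc k\<bar> + \<bar>rd k\<bar>)"
  have "real c * \<bar>ra k\<bar> \<le> ?S" "real c * \<bar>rd k\<bar> \<le> ?S" "real c * \<bar>rb k\<bar> + real c * \<bar>rc k\<bar> \<le> ?S"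
    by (simp_all add: distrib_left[symmetric] mult_left_mono)
  then show ?thesis
    unfolding Lam_def using assms(1) order_trans[OF up] order_trans[OF down] order_trans[OF stay]
    by auto
qed

lemma summable_abs_at_negatives:
  fixes x :: "int \<Rightarrow> real"
  assumes "x summable_on {..int K}"
  shows "summable (\<lambda>k. \<bar>x (- int (Suc k))\<bar>)"
proof -
  have "(\<lambda>k. norm (x k)) summable_on range (\<lambda>k. - int (Suc k))"
    using summable_on_iff_abs_summable_on_real[THEN iffD1, OF assms]
    by (rule summable_on_subset_banach) auto
  then have "((\<lambda>k. norm (x k)) \<circ> (\<lambda>k. - int (Suc k))) summable_on UNIV"
    by (subst (asm) summable_on_reindex) (auto simp: inj_def)
  then show ?thesis by (subst (asm) summable_on_UNIV_nonneg_real_iff) (auto simp: comp_def)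
qed

lemma summable_Lam_lower_blocks:
  assumes "ra summable_on {..int K}" "rb summable_on {..int K}"
    "rc summable_on {..int K}" "rd summable_on {..int K}"
  shows "summable (\<lambda>k. \<Sum>m\<le>c. \<Sum>m'\<le>c. \<bar>Lam c K ra rb rc rd (- int (Suc k)) m m'\<bar>)"
proof (rule summable_comparison_test'[where N=0])
  define \<sigma> where "\<sigma> k = \<bar>ra (- int (Suc k))\<bar> + \<bar>rb (- int (Suc k))\<bar> + \<bar>rc (- int (Suc k))\<bar>
      + \<bar>rd (- int (Suc k))\<bar>" for k
  show "summable (\<lambda>k. (real c + 1) * (real c + 1) * (real c * \<sigma> k))"
    unfolding \<sigma>_def using assms
    by (intro summable_mult summable_add summable_abs_at_negatives)
  show "norm (\<Sum>m\<le>c. \<Sum>m'\<le>c. \<bar>Lam c K ra rb rc rd (- int (Suc k)) m m'\<bar>)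
      \<le> (real c + 1) * (real c + 1) * (real c * \<sigma> k)" for k
  proof -
    have "(\<Sum>m\<le>c. \<Sum>m'\<le>c. \<bar>Lam c K ra rb rc rd (- int (Suc k)) m m'\<bar>) \<le> (\<Sum>m\<le>c. \<Sum>m'\<le>c. real c * \<sigma> k)"
      unfolding \<sigma>_def by (intro sum_mono abs_Lam_le) auto
    then show ?thesis by (simp add: sum_nonneg add.commute mult.assoc)
  qed
qed

section \<open>Roots of (S_eta)\<close>

lemma quadratic_root_formula:
  fixes A D F R x :: complex
  assumes "D \<noteq> 0" and "x\<^sup>2 = 1" and "R\<^sup>2 = F\<^sup>2 + 4 * A * D"
  shows "D * ((F + x * R) / (2 * D))\<^sup>2 = F * ((F + x * R) / (2 * D)) + A"
proof -
  have "D * ((F + x * R) / (2 * D))\<^sup>2 - (F * ((F + x * R) / (2 * D)) + A)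
      = (x\<^sup>2 * R\<^sup>2 - (F\<^sup>2 + 4 * A * D)) / (4 * D)"
    using assms(1) by (simp add: field_simps power2_eq_square)
  then show ?thesis using assms(2,3) by simp
qed

lemma S_eq_root_nonzero:
  assumes "1 \<le> K" and "ra (int K) = 0 \<or> rd (int K) = 0" and "rb (int K) = rc (int K)" "rc (int K) \<noteq> 0"
    and "R b ^ 2 = Fz K ra rb rc rd b ^ 2 + 4 * genf K ra b * genf K rd b"
    and "S_eq K ra rb rc rd R \<eta> b"
  shows "b \<noteq> 0"
proof
  assume b: "b = 0"
  have K0: "(0::complex) ^ K = 0" using assms(1) by simp
  have "Fz K ra rb rc rd b = 0" unfolding b Fz_def genf_at_0 K0 using assms(3) by simp
  moreover have "genf K ra b * genf K rd b = 0" using assms(2) unfolding b genf_at_0 by auto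
  ultimately have "R b ^ 2 = 0" using assms(5) by simp
  then have "R b = 0" by simp
  then have "of_real (rb (int K) + rc (int K)) = (0::complex)"
    using assms(6) unfolding S_eq_def b genf_at_0 K0 by (simp add: b)
  then show False using assms(3,4) by simp
qed

lemma omega_eq_esym: "omega c \<beta> = esym {1..c} \<beta>"
  unfolding omega_def esym_def ..

lemma omega_Suc_c: "omega c \<beta> (Suc c) = 0"
proof -
  have "card I \<noteq> Suc c" if "I \<subseteq> {1..c}" for I
    using card_mono[OF _ that] by simp
  then have empty: "{I. I \<subseteq> {1..c} \<and> card I = Suc c} = {}" by auto
  show ?thesis unfolding omega_def empty by simp
qed

lemma omega_root_eigen:
  fixes K :: nat and ra rb rc rd :: "int \<Rightarrow> real" and R :: "complex \<Rightarrow> complex"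
    and b :: complex and x :: "nat \<Rightarrow> real"
  defines "\<beta> \<equiv> \<lambda>i. (Fz K ra rb rc rd b + of_real (x i) * R b) / (2 * genf K rd b)"
  assumes "1 \<le> c" and D: "genf K rd b \<noteq> 0"
    and R: "R b ^ 2 = Fz K ra rb rc rd b ^ 2 + 4 * genf K ra b * genf K rd b"
    and S: "S_eq K ra rb rc rd R \<eta> b"
    and x: "\<forall>i\<in>{1..c}. x i \<in> {-1, 1}" and \<eta>: "- (1 / real c) * (\<Sum>i\<in>{1..c}. x i) = \<eta>"
  shows "bd_vecmult (genf K ra b) (genf K rb b - b ^ K * of_real (genf1 K ra + genf1 K rb))
      (genf K rc b - b ^ K * of_real (genf1 K rc + genf1 K rd)) (genf K rd b) c (omega c \<beta>) m = 0"
proof -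
  define P where "P = b ^ K * of_real (genf1 K ra + genf1 K rb)"
  define Q where "Q = b ^ K * of_real (genf1 K rc + genf1 K rd)"
  have F: "Fz K ra rb rc rd b = (genf K rc b - Q) - (genf K rb b - P)"
    unfolding Fz_def P_def Q_def by (simp add: algebra_simps)
  have "\<forall>i\<in>{1..c}. genf K rd b * \<beta> i ^ 2 = ((genf K rc b - Q) - (genf K rb b - P)) * \<beta> i + genf K ra b"
  proof
    fix i assume "i \<in> {1..c}"
    then have "x i = -1 \<or> x i = 1" using x by auto
    then have "(complex_of_real (x i))\<^sup>2 = 1" by (auto simp: power2_eq_square)
    then show "genf K rd b * \<beta> i ^ 2 = ((genf K rc b - Q) - (genf K rb b - P)) * \<beta> i + genf K ra b"
      unfolding \<beta>_def F[symmetric] by (rule quadratic_root_formula[OF D _ R])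
  qed
  then have "bd_vecmult (genf K ra b) (genf K rb b - P) (genf K rc b - Q) (genf K rd b) c (omega c \<beta>) m
      = (\<Sum>i\<in>{1..c}. genf K rd b * \<beta> i + (genf K rb b - P)) * omega c \<beta> m"
    using esym_bd_eigenvector[of "{1..c}"] unfolding omega_eq_esym by simp
  also have "(\<Sum>i\<in>{1..c}. genf K rd b * \<beta> i + (genf K rb b - P))
      = of_nat c / 2 * (Fz K ra rb rc rd b + 2 * genf K rb b - 2 * P - of_real \<eta> * R b)"
  proof -
    have "genf K rd b * \<beta> i = Fz K ra rb rc rd b / 2 + R b / 2 * of_real (x i)" for i
      unfolding \<beta>_def using D by (simp add: field_simps)
    then have "(\<Sum>i\<in>{1..c}. genf K rd b * \<beta> i + (genf K rb b - P))
        = (\<Sum>i\<in>{1..c}. (Fz K ra rb rc rd b / 2 + genf K rb b - P) + R b / 2 * of_real (x i))"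
      by (simp add: algebra_simps)
    also have "\<dots> = of_nat c * (Fz K ra rb rc rd b / 2 + genf K rb b - P) + R b / 2 * of_real (\<Sum>i\<in>{1..c}. x i)"
      by (simp add: sum.distrib sum_distrib_left)
    also have "(\<Sum>i\<in>{1..c}. x i) = - real c * \<eta>"
      using \<eta> \<open>1 \<le> c\<close> by (simp add: field_simps)
    finally show ?thesis by (simp add: algebra_simps)
  qed
  also have "Fz K ra rb rc rd b + 2 * genf K rb b - 2 * P - of_real \<eta> * R b = 0"
    using S unfolding S_eq_def Fz_def P_def by (simp add: algebra_simps)
  finally show ?thesis unfolding P_def Q_def by simp
qed

lemma geometric_row_at_root:
  fixes K :: nat and ra rb rc rd :: "int \<Rightarrow> real" and R :: "complex \<Rightarrow> complex"
    and b :: complex and x :: "nat \<Rightarrow> real"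
  assumes "level_ode c K (Lam c K ra rb rc rd) F" and "1 \<le> c" and "1 \<le> K"
    and rates: "ra summable_on {..int K}" "rb summable_on {..int K}"
      "rc summable_on {..int K}" "rd summable_on {..int K}"
    and "ra (int K) = 0 \<or> rd (int K) = 0" and "rb (int K) = rc (int K)" "rc (int K) \<noteq> 0"
    and upper: "\<forall>i\<in>{1..K}. \<forall>m\<le>c. \<forall>m'\<le>c.
        Lam c K ra rb rc rd (int i) m m' = (if m = m' then lam i else 0)"
    and "norm b < 1" and D: "genf K rd b \<noteq> 0"
    and R: "R b ^ 2 = Fz K ra rb rc rd b ^ 2 + 4 * genf K ra b * genf K rd b"
    and S: "S_eq K ra rb rc rd R \<eta> b"
    and x: "\<forall>i\<in>{1..c}. x i \<in> {-1, 1}" "- (1 / real c) * (\<Sum>i\<in>{1..c}. x i) = \<eta>"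
  shows "geometric_row c K (Lam c K ra rb rc rd) F b
    (omega c (\<lambda>i. (Fz K ra rb rc rd b + of_real (x i) * R b) / (2 * genf K rd b))) lam"
proof -
  interpret level_ode c K "Lam c K ra rb rc rd" F by fact
  have nonzero: "b \<noteq> 0" by (rule S_eq_root_nonzero) (use assms in auto)
  show ?thesis
  proof
    show upper: "Lam c K ra rb rc rd (int i) m m' = (if m = m' then lam i else 0)"
      if "i \<in> {1..K}" "m \<le> c" "m' \<le> c" for i m m'
      using upper that by blast
    show "(\<lambda>k. b ^ k * (\<Sum>m\<le>c. omega c (\<lambda>i. (Fz K ra rb rc rd b + of_real (x i) * R b) / (2 * genf K rd b)) m
            * of_real (Lam c K ra rb rc rd (- int k) m m')))
        sums (- (\<Sum>i\<in>{1..K}. of_real (lam i) / b ^ i)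
          * omega c (\<lambda>i. (Fz K ra rb rc rd b + of_real (x i) * R b) / (2 * genf K rd b)) m')"
      if "m' \<le> c" for m'
      by (rule Lam_lower_blocks_sums[OF rates \<open>norm b < 1\<close> nonzero omega_Suc_c that upper
            omega_root_eigen[OF \<open>1 \<le> c\<close> D R S x]]) (use that in auto)
  qed fact
qed

theorem theorem4:
  fixes c K :: nat
    and ra rb rc rd :: "int \<Rightarrow> real"
    and V :: "'v set" and q :: "'v st \<Rightarrow> 'v st \<Rightarrow> real" and p :: "'v st \<Rightarrow> real"
    and R :: "complex \<Rightarrow> complex"
    and \<eta> :: "nat \<Rightarrow> real" and \<beta>0 :: "nat \<Rightarrow> complex" and x :: "nat \<Rightarrow> nat \<Rightarrow> real"
    and \<gamma> :: "nat \<Rightarrow> complex"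
    and lam :: "nat \<Rightarrow> real"
    and Fp :: "nat \<Rightarrow> nat \<Rightarrow> real \<Rightarrow> real"
  assumes c_pos: "1 \<le> c" and K_pos: "1 \<le> K"
    and rates_nonneg: "\<forall>k\<le>int K. 0 \<le> ra k \<and> 0 \<le> rb k \<and> 0 \<le> rc k \<and> 0 \<le> rd k"
    and process: "sym_process c K ra rb rc rd V q"
    and irred: "irreducible_on (Sset V c) q"
    \<comment> \<open>Assumption (A)\<close>
    and A_i: "ra summable_on {..int K}" "rb summable_on {..int K}"
             "rc summable_on {..int K}" "rd summable_on {..int K}"
    and A_ii: "0 < genf1 K ra" "0 < genf1 K rd"
    and A_iii: "(\<lambda>k. real_of_int (int K - k) * ra k) summable_on {..int K}"
               "(\<lambda>k. real_of_int (int K - k) * rb k) summable_on {..int K}"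
               "(\<lambda>k. real_of_int (int K - k) * rc k) summable_on {..int K}"
               "(\<lambda>k. real_of_int (int K - k) * rd k) summable_on {..int K}"
    and A_iv: "ra (int K) = 0 \<or> rd (int K) = 0"
    and A_v: "rb (int K) = rc (int K)" "rc (int K) \<noteq> 0"
    \<comment> \<open>Ergodicity (E_s)\<close>
    and E_s: "0 < genf1 K rd * (dgenf1 K ra - real K * genf1 K ra + dgenf1 K rb - real K * genf1 K rb)
                + genf1 K ra * (dgenf1 K rc - real K * genf1 K rc + dgenf1 K rd - real K * genf1 K rd)"
    \<comment> \<open>R is a fixed square root of F^2 + 4AD on the open unit disc\<close>
    and R_sqrt: "\<forall>z. cmod z < 1 \<longrightarrow>
        R z ^ 2 = Fz K ra rb rc rd z ^ 2 + 4 * genf K ra z * genf K rd z"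
    \<comment> \<open>Assumptions (B), (C)\<close>
    and B_C: "\<forall>(e, b)\<in>rootpairs c K ra rb rc rd R.
        Fz K ra rb rc rd b ^ 2 + 4 * genf K ra b * genf K rd b \<noteq> 0 \<and> genf K rd b \<noteq> 0"
    \<comment> \<open>Assumption (D)\<close>
    and D_assm: "\<forall>i\<in>{1..K}. 0 \<le> lam i \<and> (\<forall>m\<le>c. \<forall>m'\<le>c.
        Lam c K ra rb rc rd (int i) m m' = (if m = m' then lam i else 0))"
    \<comment> \<open>the enumeration of the pairs (eta^(j), beta_{0,j}), j = 1..K(c+1)\<close>
    and pairs: "bij_betw (\<lambda>j. (\<eta> j, \<beta>0 j)) {1..K * (c + 1)} (rootpairs c K ra rb rc rd R)"
    and x_def: "\<forall>j\<in>{1..K * (c + 1)}. (\<forall>i\<in>{1..c}. x j i \<in> {-1, 1})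
                  \<and> - (1 / real c) * (\<Sum>i\<in>{1..c}. x j i) = \<eta> j"
    \<comment> \<open>equilibrium distribution and the constants gamma_j\<close>
    and equil: "equilibrium (Sset V c) q p"
    and gamma: "\<forall>n0 m. m \<le> c \<longrightarrow> complex_of_real (pagg c p n0 m) =
        (\<Sum>j\<in>{1..K * (c + 1)}. \<gamma> j * \<beta>0 j ^ n0 *
           omega c (\<lambda>i. (Fz K ra rb rc rd (\<beta>0 j) + complex_of_real (x j i) * R (\<beta>0 j))
                          / (2 * genf K rd (\<beta>0 j))) m)"
    \<comment> \<open>the first-passage functions F_{n0,m}(t), via their defining ODE system\<close>
    and Fp_init: "\<forall>n0 m. m \<le> c \<longrightarrow> Fp n0 m 0 = 1"
    and Fp_ode: "\<forall>n0 m t. m \<le> c \<longrightarrow> 0 \<le> t \<longrightarrow>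
        ((Fp n0 m) has_real_derivative
           ((\<Sum>i\<in>{0..K}. \<Sum>m'\<le>c. Lam c K ra rb rc rd (int i) m m' * Fp n0 m' t)
            + (\<Sum>k\<in>{1..n0}. \<Sum>m'\<le>c. Lam c K ra rb rc rd (- int k) m m' * Fp (n0 - k) m' t)))
        (at t within {0..})"
  shows "\<forall>t\<ge>0.
    (\<Sum>j\<in>{1..K * (c + 1)}. \<gamma> j *
       (\<Sum>n0. \<Sum>m\<le>c. \<beta>0 j ^ n0 *
          omega c (\<lambda>i. (Fz K ra rb rc rd (\<beta>0 j) + complex_of_real (x j i) * R (\<beta>0 j))
                         / (2 * genf K rd (\<beta>0 j))) m * complex_of_real (Fp n0 m t)))
    = (\<Sum>j\<in>{1..K * (c + 1)}.
         \<gamma> j * (\<Sum>m\<le>c. omega c (\<lambda>i. (Fz K ra rb rc rd (\<beta>0 j) + complex_of_real (x j i) * R (\<beta>0 j))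
                         / (2 * genf K rd (\<beta>0 j))) m) / (1 - \<beta>0 j)
         * exp (complex_of_real t * (\<Sum>i\<in>{1..K}. (1 - 1 / \<beta>0 j ^ i) * complex_of_real (lam i))))"
proof -
  interpret level_ode c K "Lam c K ra rb rc rd" Fp
    using Fp_init Fp_ode summable_Lam_lower_blocks[OF A_i] by unfold_locales auto
  have "\<gamma> j * (\<Sum>n0. \<Sum>m\<le>c. \<beta>0 j ^ n0 *
          omega c (\<lambda>i. (Fz K ra rb rc rd (\<beta>0 j) + of_real (x j i) * R (\<beta>0 j))
                         / (2 * genf K rd (\<beta>0 j))) m * of_real (Fp n0 m t))
      = \<gamma> j * (\<Sum>m\<le>c. omega c (\<lambda>i. (Fz K ra rb rc rd (\<beta>0 j) + of_real (x j i) * R (\<beta>0 j))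
                         / (2 * genf K rd (\<beta>0 j))) m) / (1 - \<beta>0 j)
        * exp (of_real t * (\<Sum>i\<in>{1..K}. (1 - 1 / \<beta>0 j ^ i) * of_real (lam i)))"
    if j: "j \<in> {1..K * (c + 1)}" and t: "0 \<le> t" for j t
  proof -
    have "(\<eta> j, \<beta>0 j) \<in> rootpairs c K ra rb rc rd R"
      using bij_betw_apply[OF pairs j] by simp
    then have "S_eq K ra rb rc rd R (\<eta> j) (\<beta>0 j)" "norm (\<beta>0 j) < 1" "genf K rd (\<beta>0 j) \<noteq> 0"
      using B_C unfolding rootpairs_def by auto
    then interpret geometric_row c K "Lam c K ra rb rc rd" Fp "\<beta>0 j"
      "omega c (\<lambda>i. (Fz K ra rb rc rd (\<beta>0 j) + of_real (x j i) * R (\<beta>0 j)) / (2 * genf K rd (\<beta>0 j)))" lam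
      using x_def j R_sqrt D_assm
      by (intro geometric_row_at_root level_ode_axioms c_pos K_pos A_i A_iv A_v) auto
    show ?thesis using generating_series[OF t] unfolding rate_def by (simp add: mult_ac)
  qed
  then show ?thesis by (auto intro!: sum.cong)
qed

end
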